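(* Suppose $q$ is even. Let $\mathfrak q_1,\dots,\mathfrak q_s$ be distinct primes of $A$ ($s\ge0$), $e_1,\dots,e_s\ge1$, $\mathfrak m=\mathfrak q_1^{2e_1-1}\cdots\mathfrak q_s^{2e_s-1}$, and $\mathfrak n\in A$ coprime to $\mathfrak m$, such that $X^2+X-\mathfrak n/\mathfrak m$ is irreducible over $F$; let $K$ be its splitting field and $\mathcal O_K$ the integral closure of $A$ in $K$. Put $\mathcal D=\mathfrak q_1^{e_1}\cdots\mathfrak q_s^{e_s}$ and fix $\epsilon\in\mathbb F_q^\times$. Let $\alpha\in K$ be a root of $$f(X)=X^2+\epsilon\mathcal D X+\epsilon^2\mathfrak q_1\cdots\mathfrak q_s\mathfrak n.$$ Then $\mathcal O_K=A[\alpha]$.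
   Context: $A=\mathbb F_q[T]$, $F=\mathbb F_q(T)$, with $q$ a power of $2$; primes of $A$ are monic irreducible polynomials. (In the paper, $\mathcal D$ is identified with the different of $\mathcal O_K$ over $A$, and $\alpha=\epsilon\mathcal D\beta$ where $\beta^2+\beta=\mathfrak n/\mathfrak m$.) *)

theory Defs
  imports "HOL-Computational_Algebra.Computational_Algebra"
begin

text \<open>A = k[T] is 'k poly, F = k(T) is 'k poly fract. An extension field of F is
 modelled by a field type 'K together with a ring homomorphism F -> 'K.\<close>

definition is_ring_hom :: "('a::ring_1 \<Rightarrow> 'b::ring_1) \<Rightarrow> bool" where
  "is_ring_hom h \<longleftrightarrow> h 1 = 1 \<and> (\<forall>x y. h (x + y) = h x + h y) \<and> (\<forall>x y. h (x * y) = h x * h y)"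

definition is_subfield :: "'a::field set \<Rightarrow> bool" where
  "is_subfield L \<longleftrightarrow> 0 \<in> L \<and> 1 \<in> L \<and> (\<forall>x\<in>L. \<forall>y\<in>L. x + y \<in> L \<and> x * y \<in> L)
     \<and> (\<forall>x\<in>L. - x \<in> L \<and> inverse x \<in> L)"

definition subfield_generated :: "'a::field set \<Rightarrow> 'a set" where
  "subfield_generated S = \<Inter>{L. S \<subseteq> L \<and> is_subfield L}"

definition splitting_field_in ::
  "('f::field \<Rightarrow> 'K::field) \<Rightarrow> 'f poly \<Rightarrow> 'K set" where
  "splitting_field_in emb g =
     subfield_generated (range emb \<union> {x. poly (map_poly emb g) x = 0})"

definition integral_closure_in :: "('a::comm_ring_1 \<Rightarrow> 'K::field) \<Rightarrow> 'K set \<Rightarrow> 'K set" where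
  "integral_closure_in h K = {x \<in> K. \<exists>p :: 'a poly. lead_coeff p = 1 \<and> poly (map_poly h p) x = 0}"

definition ring_adjoin :: "('a::comm_ring_1 \<Rightarrow> 'K::field) \<Rightarrow> 'K \<Rightarrow> 'K set" where
  "ring_adjoin h \<alpha> = {poly (map_poly h p) \<alpha> | p :: 'a poly. True}"

end

theory Submission
  imports Defs
begin

(* Put c = n / m, delta = epsilon D and gamma = epsilon^2 q_1 ... q_s n, so that
   gamma = delta^2 c and beta = alpha / delta is a root of X^2 + X - c, whose splitting field is
   F(beta).  If x = u + v beta with v \<noteq> 0 is integral over A, Gauss's lemma applied to its
   minimal polynomial X^2 + v X + (u^2 - u v - v^2 c) (characteristic 2) puts v and the norm
   in A.  Writing u = a / d and w = v / delta = b / d over a common denominator without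
   common prime factors, d divides delta b and d^2 divides a^2 - a b delta - b^2 gamma.  Since
   every prime of delta divides gamma exactly once, no prime divides d, so x = u + w alpha
   lies in A[alpha]. *)

section \<open>Homomorphisms of fields\<close>

locale field_hom =
  fixes E :: "'a::field \<Rightarrow> 'b::field"
  assumes is_ring_hom: "is_ring_hom E"
begin

lemma hom_1 [simp]: "E 1 = 1"
  and hom_add [simp]: "E (x + y) = E x + E y"
  and hom_mult [simp]: "E (x * y) = E x * E y"
  using is_ring_hom unfolding is_ring_hom_def by auto

lemma hom_0 [simp]: "E 0 = 0"
  by (metis add_cancel_right_right hom_add)

lemma hom_uminus [simp]: "E (- x) = - E x"
  by (metis add.inverse_unique ab_left_minus hom_0 hom_add)

lemma hom_diff [simp]: "E (x - y) = E x - E y"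
  using hom_add[of x "- y"] by simp

lemma hom_power [simp]: "E (x ^ k) = E x ^ k"
  by (induction k) simp_all

lemma hom_of_nat [simp]: "E (of_nat k) = of_nat k"
  by (induction k) simp_all

lemma hom_numeral [simp]: "E (numeral k) = numeral k"
  by (metis hom_of_nat of_nat_numeral)

lemma hom_mult_inverse: "x \<noteq> 0 \<Longrightarrow> E x * E (inverse x) = 1"
  by (metis hom_1 hom_mult right_inverse)

lemma hom_eq_0_iff [simp]: "E x = 0 \<longleftrightarrow> x = 0"
  by (metis hom_0 hom_mult_inverse mult_zero_left zero_neq_one)

lemma hom_inverse [simp]: "E (inverse x) = inverse (E x)"
  by (metis hom_0 hom_mult_inverse inverse_unique inverse_zero)

lemma hom_divide [simp]: "E (x / y) = E x / E y"
  by (simp add: divide_inverse)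

lemma map_poly_hom_pCons [simp]: "map_poly E (pCons a p) = pCons (E a) (map_poly E p)"
  by (simp add: map_poly_pCons)

lemma map_poly_hom_add: "map_poly E (p + q) = map_poly E p + map_poly E q"
  by (rule poly_eqI) (simp add: coeff_map_poly)

lemma map_poly_hom_smult: "map_poly E (smult a p) = smult (E a) (map_poly E p)"
  by (rule poly_eqI) (simp add: coeff_map_poly)

lemma map_poly_hom_mult: "map_poly E (p * q) = map_poly E p * map_poly E q"
  by (induction p) (simp_all add: map_poly_hom_add map_poly_hom_smult)

lemma poly_map_poly_hom [simp]: "poly (map_poly E p) (E x) = E (poly p x)"
  by (induction p) simp_all

lemma poly_map_poly_hom_in_subfield:
  assumes "is_subfield L" "range E \<subseteq> L" "x \<in> L"
  shows "poly (map_poly E p) x \<in> L"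
  using assms by (induction p) (auto simp: is_subfield_def image_subset_iff)

(* A root outside the image of E is killed by no nonzero polynomial of degree < 2, so the
   remainder of p modulo h vanishes. *)
lemma quadratic_dvd_of_common_root:
  assumes deg: "degree h = 2" and h_root: "poly (map_poly E h) x = 0"
    and p_root: "poly (map_poly E p) x = 0" and not_in_range: "x \<notin> range E"
  shows "h dvd p"
proof -
  define r where "r = p mod h"
  have "h \<noteq> 0"
    using deg by auto
  then have "degree r < 2"
    using degree_mod_less[of h p] deg by (auto simp: r_def)
  then have r: "r = [:coeff r 0, coeff r 1:]"
    by (intro poly_eqI) (auto simp: coeff_pCons coeff_eq_0 split: nat.split)
  have "map_poly E p = map_poly E h * map_poly E (p div h) + map_poly E r"
    by (metis r_def div_mult_mod_eq map_poly_hom_add map_poly_hom_mult mult.commute)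
  then have "poly (map_poly E r) x = 0"
    using h_root p_root by (metis add_0 mult_zero_left poly_add poly_mult)
  then have r_root: "E (coeff r 0) + x * E (coeff r 1) = 0"
    by (subst (asm) r) simp
  have "coeff r 1 = 0"
  proof (rule ccontr)
    assume "coeff r 1 \<noteq> 0"
    then have "x = E (- coeff r 0 / coeff r 1)"
      using r_root by (simp add: field_simps add_eq_0_iff)
    with not_in_range show False
      by blast
  qed
  with r_root have "coeff r 0 = 0"
    by simp
  with \<open>coeff r 1 = 0\<close> have "r = 0"
    by (subst r) simp
  then show ?thesis
    by (simp add: r_def mod_eq_0_iff_dvd)
qed

end

lemma subfield_generated_is_subfield: "is_subfield (subfield_generated S)"
  by (auto simp: subfield_generated_def is_subfield_def)

lemma subfield_generated_least: "S \<subseteq> L \<Longrightarrow> is_subfield L \<Longrightarrow> subfield_generated S \<subseteq> L"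
  by (auto simp: subfield_generated_def)

lemma subset_subfield_generated: "S \<subseteq> subfield_generated S"
  by (auto simp: subfield_generated_def)

section \<open>Gauss's lemma over k[T]\<close>

lemma field_poly_prime_divisor_exists:
  fixes d :: "'a::field poly"
  assumes "d \<noteq> 0" "\<not> is_unit d"
  shows "\<exists>\<pi>. prime_elem \<pi> \<and> \<pi> dvd d"
  using assms
proof (induction "degree d" arbitrary: d rule: less_induct)
  case less
  show ?case
  proof (cases "irreducible d")
    case True
    then have "prime_elem d"
      by (rule field_poly_irreducible_imp_prime)
    then show ?thesis
      by (intro exI[of _ d]) simp
  next
    case False
    then obtain a b where ab: "d = a * b" "\<not> is_unit a" "\<not> is_unit b"
      using less.prems unfolding irreducible_def by auto
    then have "a \<noteq> 0" "b \<noteq> 0"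
      using less.prems by auto
    moreover have "degree b \<noteq> 0"
      using ab(3) is_unit_iff_degree[OF \<open>b \<noteq> 0\<close>] by simp
    ultimately have "degree a < degree d"
      using ab(1) by (simp add: degree_mult_eq)
    then obtain \<pi> where "prime_elem \<pi>" "\<pi> dvd a"
      using less.hyps[OF _ \<open>a \<noteq> 0\<close> ab(2)] by blast
    with ab(1) show ?thesis
      using dvd_mult2 by blast
  qed
qed

lemma prime_elem_degree_pos:
  fixes \<pi> :: "'a::field poly"
  assumes "prime_elem \<pi>"
  shows "degree \<pi> > 0"
  using assms is_unit_iff_degree[of \<pi>] prime_elem_not_unit[of \<pi>] by simp

lemma prime_elem_dvd_coeffs_mult:
  fixes H G :: "'a::idom poly"
  assumes prime: "prime_elem \<pi>" and dvd: "\<forall>n. \<pi> dvd coeff (H * G) n"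
  shows "(\<forall>i. \<pi> dvd coeff H i) \<or> (\<forall>j. \<pi> dvd coeff G j)"
proof (rule ccontr)
  assume "\<not> ?thesis"
  then obtain i j where "\<not> \<pi> dvd coeff H i" "\<not> \<pi> dvd coeff G j"
    by blast
  define i0 where "i0 = (LEAST i. \<not> \<pi> dvd coeff H i)"
  define j0 where "j0 = (LEAST j. \<not> \<pi> dvd coeff G j)"
  have i0: "\<not> \<pi> dvd coeff H i0"
    unfolding i0_def using \<open>\<not> \<pi> dvd coeff H i\<close> by (rule LeastI)
  have below_i0: "\<pi> dvd coeff H i" if "i < i0" for i
    using not_less_Least[OF that[unfolded i0_def]] by simp
  have j0: "\<not> \<pi> dvd coeff G j0"
    unfolding j0_def using \<open>\<not> \<pi> dvd coeff G j\<close> by (rule LeastI)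
  have below_j0: "\<pi> dvd coeff G j" if "j < j0" for j
    using not_less_Least[OF that[unfolded j0_def]] by simp
  define n where "n = i0 + j0"
  have "coeff (H * G) n = coeff H i0 * coeff G (n - i0) + (\<Sum>i\<in>{..n} - {i0}. coeff H i * coeff G (n - i))"
    unfolding coeff_mult by (rule sum.remove) (auto simp: n_def)
  moreover have "\<pi> dvd (\<Sum>i\<in>{..n} - {i0}. coeff H i * coeff G (n - i))"
  proof (rule dvd_sum)
    fix i
    assume "i \<in> {..n} - {i0}"
    then have "i < i0 \<or> n - i < j0"
      by (auto simp: n_def)
    then show "\<pi> dvd coeff H i * coeff G (n - i)"
      using below_i0 below_j0 by (meson dvd_mult dvd_mult2)
  qed
  moreover have "\<pi> dvd coeff (H * G) n"
    using dvd by simp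
  ultimately have "\<pi> dvd coeff H i0 * coeff G (n - i0)"
    by (simp add: dvd_add_left_iff)
  then have "\<pi> dvd coeff H i0 * coeff G j0"
    by (simp add: n_def)
  then show False
    using prime i0 j0 by (metis prime_elem_dvd_multD)
qed

lemma fract_poly_clear_denominators:
  fixes h :: "'a::idom fract poly"
  shows "\<exists>d H. d \<noteq> 0 \<and> fract_poly H = smult (to_fract d) h"
proof (induction h)
  case 0
  show ?case
    by (intro exI[of _ 1] exI[of _ 0]) simp
next
  case (pCons z h)
  then obtain d H where dH: "d \<noteq> 0" "fract_poly H = smult (to_fract d) h"
    by blast
  obtain a b where z: "z = Fract a b" "b \<noteq> 0"
    by (cases z)
  then have "to_fract b * z = to_fract a"
    by (simp add: Fract_conv_to_fract)
  with dH z(2) have "fract_poly (pCons (a * d) (smult b H)) = smult (to_fract (d * b)) (pCons z h)"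
    by (simp add: map_poly_pCons map_poly_smult ac_simps)
  with dH z(2) show ?case
    by (metis mult_eq_0_iff)
qed

lemma fract_poly_divide_out_prime:
  fixes h :: "'a::idom_divide fract poly"
  assumes monic: "lead_coeff h = 1" and H: "fract_poly H = smult (to_fract d) h"
    and dvd: "\<forall>i. \<pi> dvd coeff H i" and "\<pi> \<noteq> 0"
  shows "\<exists>d' H'. d = \<pi> * d' \<and> fract_poly H' = smult (to_fract d') h"
proof -
  have coeff_H: "to_fract (coeff H i) = to_fract d * coeff h i" for i
    using arg_cong[OF H, of "\<lambda>p. coeff p i"] by (simp add: coeff_map_poly)
  have "coeff H (degree h) = d"
    using coeff_H[of "degree h"] monic by simp
  then obtain d' where d': "d = \<pi> * d'"
    using dvd by (metis dvdE)
  define H' where "H' = map_poly (\<lambda>c. c div \<pi>) H"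
  have "coeff H i = \<pi> * coeff H' i" for i
  proof -
    obtain k where "coeff H i = \<pi> * k"
      using dvd by (meson dvdE)
    with \<open>\<pi> \<noteq> 0\<close> show ?thesis
      by (simp add: H'_def coeff_map_poly)
  qed
  with coeff_H have "fract_poly H' = smult (to_fract d') h"
    using \<open>\<pi> \<noteq> 0\<close> by (intro poly_eqI) (simp add: coeff_map_poly d' mult.assoc)
  with d' show ?thesis
    by blast
qed

lemma fract_poly_unit_denominator_coeffs_integral:
  fixes h :: "'a::{algebraic_semidom,idom} fract poly"
  assumes "is_unit d" "fract_poly H = smult (to_fract d) h"
  shows "coeff h i \<in> range to_fract"
proof -
  obtain z where "coeff H i = d * z"
    using unit_imp_dvd[OF assms(1), of "coeff H i"] by (elim dvdE)
  moreover have "to_fract (coeff H i) = to_fract d * coeff h i"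
    using arg_cong[OF assms(2), of "\<lambda>p. coeff p i"] by (simp add: coeff_map_poly)
  ultimately have "coeff h i = to_fract z"
    using assms(1) by auto
  then show ?thesis
    by simp
qed

(* Gauss: if d * e is not a unit, a prime factor of it divides every coefficient of one of the
   two cleared factors H, G (prime_elem_dvd_coeffs_mult) and can be cancelled, lowering
   degree (d * e). *)
lemma cleared_monic_factor_coeffs_integral:
  fixes p :: "'a::field poly poly" and h q :: "'a poly fract poly"
  assumes h_monic: "lead_coeff h = 1" and q_monic: "lead_coeff q = 1" and pq: "fract_poly p = h * q"
    and "d \<noteq> 0" "e \<noteq> 0" "fract_poly H = smult (to_fract d) h" "fract_poly G = smult (to_fract e) q"
  shows "coeff h i \<in> range to_fract"
  using assms(4-)
proof (induction "degree (d * e)" arbitrary: d e H G rule: less_induct)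
  case less
  show ?case
  proof (cases "is_unit (d * e)")
    case True
    then show ?thesis
      using less.prems(3) by (intro fract_poly_unit_denominator_coeffs_integral) (auto simp: is_unit_mult_iff)
  next
    case False
    moreover have "d * e \<noteq> 0"
      using less.prems(1,2) by simp
    ultimately obtain \<pi> where \<pi>: "prime_elem \<pi>" "\<pi> dvd d * e"
      using field_poly_prime_divisor_exists by blast
    then have \<pi>_nz: "\<pi> \<noteq> 0"
      by simp
    have "fract_poly (H * G) = fract_poly (smult (d * e) p)"
      using less.prems(3,4) by (simp add: pq ac_simps)
    with \<pi>(2) have "\<forall>n. \<pi> dvd coeff (H * G) n"
      by (simp only: fract_poly_eq_iff) simp
    then have "(\<forall>i. \<pi> dvd coeff H i) \<or> (\<forall>j. \<pi> dvd coeff G j)"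
      by (rule prime_elem_dvd_coeffs_mult[OF \<pi>(1)])
    then show ?thesis
    proof
      assume "\<forall>i. \<pi> dvd coeff H i"
      then obtain d' H' where d': "d = \<pi> * d'" "fract_poly H' = smult (to_fract d') h"
        using fract_poly_divide_out_prime[OF h_monic less.prems(3) _ \<pi>_nz] by blast
      then have d'_nz: "d' \<noteq> 0" and "degree (d' * e) < degree (d * e)"
        using less.prems(1,2) prime_elem_degree_pos[OF \<pi>(1)] by (auto simp: degree_mult_eq)
      then show ?thesis
        using less.hyps[OF _ d'_nz less.prems(2) d'(2) less.prems(4)] by simp
    next
      assume "\<forall>j. \<pi> dvd coeff G j"
      then obtain e' G' where e': "e = \<pi> * e'" "fract_poly G' = smult (to_fract e') q"
        using fract_poly_divide_out_prime[OF q_monic less.prems(4) _ \<pi>_nz] by blast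
      then have e'_nz: "e' \<noteq> 0" and "degree (d * e') < degree (d * e)"
        using less.prems(1,2) prime_elem_degree_pos[OF \<pi>(1)] by (auto simp: degree_mult_eq)
      then show ?thesis
        using less.hyps[OF _ less.prems(1) e'_nz less.prems(3) e'(2)] by simp
    qed
  qed
qed

lemma monic_factor_coeffs_integral:
  fixes p :: "'a::field poly poly" and h :: "'a poly fract poly"
  assumes p_monic: "lead_coeff p = 1" and h_monic: "lead_coeff h = 1"
    and dvd: "h dvd fract_poly p"
  shows "coeff h i \<in> range to_fract"
proof -
  obtain q where pq: "fract_poly p = h * q"
    using dvd by (elim dvdE)
  have "lead_coeff (fract_poly p) = 1"
    using p_monic by (simp add: degree_map_poly coeff_map_poly)
  with h_monic have q_monic: "lead_coeff q = 1"
    by (simp add: pq lead_coeff_mult)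
  obtain d H where d: "d \<noteq> 0" "fract_poly H = smult (to_fract d) h"
    using fract_poly_clear_denominators by blast
  obtain e G where e: "e \<noteq> 0" "fract_poly G = smult (to_fract e) q"
    using fract_poly_clear_denominators by blast
  show ?thesis
    by (rule cleared_monic_factor_coeffs_integral[OF h_monic q_monic pq d(1) e(1) d(2) e(2)])
qed

lemma integral_root_in_range:
  fixes p :: "'a::field poly poly"
  assumes "lead_coeff p = 1" "poly (fract_poly p) u = 0"
  shows "u \<in> range to_fract"
proof -
  have "[:- u, 1:] dvd fract_poly p"
    using assms(2) by (simp add: poly_eq_0_iff_dvd)
  then have "coeff [:- u, 1:] 0 \<in> range to_fract"
    by (intro monic_factor_coeffs_integral[OF assms(1)]) simp_all
  then obtain a where "- u = to_fract a"
    by auto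
  then have "u = to_fract (- a)"
    by (metis minus_minus to_fract_uminus)
  then show ?thesis
    by (metis rangeI)
qed

section \<open>Denominators of integral elements\<close>

lemma fract_common_denominator:
  fixes u w :: "'a::field poly fract"
  obtains a b d where "d \<noteq> 0" "u = to_fract a / to_fract d" "w = to_fract b / to_fract d"
    "\<And>\<pi>. prime_elem \<pi> \<Longrightarrow> \<pi> dvd a \<Longrightarrow> \<pi> dvd b \<Longrightarrow> \<not> \<pi> dvd d"
proof -
  define R where "R = (\<lambda>(a, b, d). d \<noteq> 0 \<and> u = to_fract a / to_fract d \<and> w = to_fract b / to_fract d)"
  obtain a1 d1 where 1: "u = Fract a1 d1" "d1 \<noteq> 0"
    by (cases u)
  obtain b2 d2 where 2: "w = Fract b2 d2" "d2 \<noteq> 0"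
    by (cases w)
  have "R (a1 * d2, b2 * d1, d1 * d2)"
    using 1 2 by (simp add: R_def Fract_conv_to_fract field_simps)
  then obtain t where t: "R t" and least: "\<And>t'. R t' \<Longrightarrow> degree (snd (snd t)) \<le> degree (snd (snd t'))"
    using ex_has_least_nat[of R _ "\<lambda>t. degree (snd (snd t))"] by blast
  obtain a b d where abd: "t = (a, b, d)"
    by (cases t)
  have Rt: "d \<noteq> 0" "u = to_fract a / to_fract d" "w = to_fract b / to_fract d"
    using t by (simp_all add: abd R_def)
  have "\<not> \<pi> dvd d" if \<pi>: "prime_elem \<pi>" "\<pi> dvd a" "\<pi> dvd b" for \<pi>
  proof
    assume "\<pi> dvd d"
    with \<pi> obtain a' b' d' where a'b'd': "a = \<pi> * a'" "b = \<pi> * b'" "d = \<pi> * d'"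
      by (meson dvdE)
    with Rt have "R (a', b', d')"
      using \<pi>(1) by (simp add: R_def)
    then have "degree d \<le> degree d'"
      using least[of "(a', b', d')"] by (simp add: abd)
    moreover have "degree d = degree \<pi> + degree d'"
      using a'b'd'(3) Rt(1) by (simp add: degree_mult_eq)
    ultimately show False
      using prime_elem_degree_pos[OF \<pi>(1)] by simp
  qed
  with Rt that show ?thesis
    by blast
qed

lemma ramified_prime_dvd_norm_form:
  fixes a b \<delta> \<gamma> \<pi> :: "'a::idom"
  assumes prime: "prime_elem \<pi>" and "\<pi> dvd a" "\<pi> dvd \<delta>" "\<pi> dvd \<gamma>" "\<not> \<pi>\<^sup>2 dvd \<gamma>"
    and norm: "\<pi>\<^sup>2 dvd a\<^sup>2 - a * b * \<delta> - b\<^sup>2 * \<gamma>"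
  shows "\<pi> dvd b"
proof -
  have "\<pi>\<^sup>2 dvd a\<^sup>2 - a * b * \<delta>"
    using assms(2,3) by (simp add: power2_eq_square mult_dvd_mono)
  then have "\<pi>\<^sup>2 dvd (a\<^sup>2 - a * b * \<delta>) - (a\<^sup>2 - a * b * \<delta> - b\<^sup>2 * \<gamma>)"
    using norm by (rule dvd_diff)
  moreover obtain g where g: "\<gamma> = \<pi> * g"
    using assms(4) by (elim dvdE)
  ultimately have "\<pi> * \<pi> dvd \<pi> * (b\<^sup>2 * g)"
    by (simp add: power2_eq_square ac_simps)
  then have "\<pi> dvd b\<^sup>2 * g"
    using prime by simp
  moreover have "\<not> \<pi> dvd g"
    using assms(5) g by (auto simp: power2_eq_square)
  ultimately show ?thesis
    using prime prime_elem_dvd_mult_iff prime_elem_dvd_power by blast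
qed

(* d is the common denominator of the coordinates of (a + b alpha) / d, whose trace and norm
   are integral.  A prime pi dividing d divides b: directly from the trace if pi does not
   divide delta, and by the ramification condition otherwise.  The norm then makes pi divide
   a as well. *)
lemma ramified_denominator_is_unit:
  fixes a b d \<delta> \<gamma> :: "'a::field poly"
  assumes d: "d \<noteq> 0"
    and no_common_prime: "\<And>\<pi>. prime_elem \<pi> \<Longrightarrow> \<pi> dvd a \<Longrightarrow> \<pi> dvd b \<Longrightarrow> \<not> \<pi> dvd d"
    and trace: "d dvd \<delta> * b" and norm: "d\<^sup>2 dvd a\<^sup>2 - a * b * \<delta> - b\<^sup>2 * \<gamma>"
    and ramified: "\<And>\<pi>. prime_elem \<pi> \<Longrightarrow> \<pi> dvd \<delta> \<Longrightarrow> \<pi> dvd \<gamma> \<and> \<not> \<pi>\<^sup>2 dvd \<gamma>"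
  shows "is_unit d"
proof (rule ccontr)
  assume "\<not> is_unit d"
  then obtain \<pi> where \<pi>: "prime_elem \<pi>" "\<pi> dvd d"
    using field_poly_prime_divisor_exists d by blast
  have "\<pi>\<^sup>2 dvd d\<^sup>2"
    using \<pi>(2) by (rule dvd_power_same)
  then have \<pi>2_norm: "\<pi>\<^sup>2 dvd a\<^sup>2 - a * b * \<delta> - b\<^sup>2 * \<gamma>"
    using norm by (rule dvd_trans)
  then have \<pi>_norm: "\<pi> dvd a\<^sup>2 - a * b * \<delta> - b\<^sup>2 * \<gamma>"
    by (rule dvd_trans[rotated]) (simp add: power2_eq_square)
  have \<pi>_a: "\<pi> dvd a" if "\<pi> dvd a * b * \<delta> + b\<^sup>2 * \<gamma>"
  proof -
    have "a\<^sup>2 = (a\<^sup>2 - a * b * \<delta> - b\<^sup>2 * \<gamma>) + (a * b * \<delta> + b\<^sup>2 * \<gamma>)"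
      by (simp add: algebra_simps)
    then have "\<pi> dvd a\<^sup>2"
      using \<pi>_norm that by (metis dvd_add)
    then show ?thesis
      using \<pi>(1) prime_elem_dvd_power by blast
  qed
  have \<pi>_b: "\<pi> dvd b"
  proof (cases "\<pi> dvd \<delta>")
    case False
    have "\<pi> dvd \<delta> * b"
      using \<pi>(2) trace by (rule dvd_trans)
    with False \<pi>(1) show ?thesis
      using prime_elem_dvd_mult_iff by blast
  next
    case True
    with \<pi>(1) ramified have "\<pi> dvd \<gamma>" "\<not> \<pi>\<^sup>2 dvd \<gamma>"
      by auto
    moreover from True this(1) have "\<pi> dvd a"
      by (intro \<pi>_a) simp
    ultimately show ?thesis
      using ramified_prime_dvd_norm_form[OF \<pi>(1) _ True _ _ \<pi>2_norm] by blast
  qed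
  then have "\<pi> dvd a"
    by (intro \<pi>_a) (simp add: power2_eq_square)
  with \<pi> \<pi>_b show False
    using no_common_prime by blast
qed

lemma integral_coordinates:
  fixes u w :: "'a::field poly fract" and \<delta> \<gamma> :: "'a poly"
  assumes trace: "to_fract \<delta> * w \<in> range to_fract"
    and norm: "u\<^sup>2 - to_fract \<delta> * u * w - to_fract \<gamma> * w\<^sup>2 \<in> range to_fract"
    and ramified: "\<And>\<pi>. prime_elem \<pi> \<Longrightarrow> \<pi> dvd \<delta> \<Longrightarrow> \<pi> dvd \<gamma> \<and> \<not> \<pi>\<^sup>2 dvd \<gamma>"
  shows "u \<in> range to_fract" "w \<in> range to_fract"
proof -
  obtain a b d where d: "d \<noteq> 0" and u: "u = to_fract a / to_fract d" and w: "w = to_fract b / to_fract d"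
    and no_common_prime: "\<And>\<pi>. prime_elem \<pi> \<Longrightarrow> \<pi> dvd a \<Longrightarrow> \<pi> dvd b \<Longrightarrow> \<not> \<pi> dvd d"
    using fract_common_denominator[of u w] by blast
  obtain V where V: "to_fract \<delta> * w = to_fract V"
    using trace by auto
  obtain M where M: "u\<^sup>2 - to_fract \<delta> * u * w - to_fract \<gamma> * w\<^sup>2 = to_fract M"
    using norm by auto
  have a: "to_fract a = u * to_fract d" and b: "to_fract b = w * to_fract d"
    using d by (simp_all add: u w)
  have "to_fract (d * V) = to_fract (\<delta> * b)"
    by (simp add: b flip: V)
  then have "d dvd \<delta> * b"
    by (metis dvdI to_fract_eq_iff)
  moreover have "to_fract (d\<^sup>2 * M) = to_fract (a\<^sup>2 - a * b * \<delta> - b\<^sup>2 * \<gamma>)"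
    by (simp add: a b power2_eq_square algebra_simps flip: M)
  then have "d\<^sup>2 dvd a\<^sup>2 - a * b * \<delta> - b\<^sup>2 * \<gamma>"
    by (metis dvdI to_fract_eq_iff)
  ultimately have "is_unit d"
    using ramified_denominator_is_unit[OF d no_common_prime _ _ ramified] by blast
  then have "d dvd a" "d dvd b"
    by (simp_all add: unit_imp_dvd)
  then obtain a' b' where "a = d * a'" "b = d * b'"
    by (elim dvdE)
  with d show "u \<in> range to_fract" "w \<in> range to_fract"
    by (simp_all add: u w)
qed

section \<open>Artin--Schreier extensions\<close>

lemma to_fract_of_nat [simp]: "to_fract (of_nat k) = of_nat k"
  by (induction k) simp_all

lemma to_fract_power [simp]: "to_fract (x ^ k) = to_fract x ^ k"
  by (induction k) simp_all

lemma to_fract_numeral [simp]: "to_fract (numeral k) = numeral k"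
  by (metis to_fract_of_nat of_nat_numeral)

lemma char_2_add_self:
  assumes "CHAR('k::field) = 2"
  shows "(x :: 'k poly fract) + x = 0"
proof -
  have "(of_nat CHAR('k poly) :: 'k poly) = 0"
    by (rule of_nat_CHAR)
  then have "to_fract (2 :: 'k poly) = 0"
    using assms by simp
  then have "(2 :: 'k poly fract) = 0"
    by simp
  then show ?thesis
    by (metis mult_2 mult_zero_left)
qed

lemma irreducible_field_poly_no_root:
  fixes p :: "'a::field poly"
  assumes "irreducible p" "degree p > 1"
  shows "poly p x \<noteq> 0"
proof
  assume "poly p x = 0"
  then obtain k where k: "p = [:- x, 1:] * k"
    by (metis dvdE poly_eq_0_iff_dvd)
  then have "k \<noteq> 0" "\<not> is_unit [:- x, 1:]"
    using assms by (auto simp: is_unit_iff_degree)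
  have "degree p = degree [:- x, 1:] + degree k"
    unfolding k using \<open>k \<noteq> 0\<close> by (intro degree_mult_eq) auto
  then have "degree p = Suc (degree k)"
    by simp
  with assms(2) \<open>k \<noteq> 0\<close> have "\<not> is_unit k"
    by (simp add: is_unit_iff_degree)
  with \<open>\<not> is_unit [:- x, 1:]\<close> show False
    using irreducibleD[OF assms(1) k] by simp
qed

definition artin_schreier_poly :: "'a::comm_ring_1 \<Rightarrow> 'a poly" where
  "artin_schreier_poly c = [:- c, 1, 1:]"

lemma degree_artin_schreier_poly [simp]: "degree (artin_schreier_poly c) = 2"
  by (simp add: artin_schreier_poly_def)

locale artin_schreier_extension = field_hom E
  for E :: "'k::field poly fract \<Rightarrow> 'K::field" +
  fixes c :: "'k poly fract" and \<delta> \<gamma> :: "'k poly" and \<beta> :: 'K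
  assumes char_2: "CHAR('k) = 2"
    and irreducible: "irreducible (artin_schreier_poly c)"
    and root: "\<beta> * \<beta> + \<beta> = E c"
    and gamma_eq: "to_fract \<gamma> = to_fract \<delta> ^ 2 * c"
    and delta_nonzero: "\<delta> \<noteq> 0"
    and ramified: "\<And>\<pi>. prime_elem \<pi> \<Longrightarrow> \<pi> dvd \<delta> \<Longrightarrow> \<pi> dvd \<gamma> \<and> \<not> \<pi>\<^sup>2 dvd \<gamma>"
begin

definition alpha :: 'K where
  "alpha = E (to_fract \<delta>) * \<beta>"

definition F_beta :: "'K set" where
  "F_beta = {E u + E v * \<beta> | u v. True}"

definition A_alpha :: "'K set" where
  "A_alpha = {E (to_fract a) + E (to_fract b) * alpha | a b. True}"

lemma poly_artin_schreier_poly: "poly (map_poly E (artin_schreier_poly c)) x = x * x + x - E c"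
  by (simp add: artin_schreier_poly_def algebra_simps)

lemma artin_schreier_poly_no_root: "poly (artin_schreier_poly c) z \<noteq> 0"
  using irreducible by (rule irreducible_field_poly_no_root) simp

lemma beta_not_in_range: "\<beta> \<notin> range E"
proof
  assume "\<beta> \<in> range E"
  then obtain z where "\<beta> = E z"
    by blast
  then have "E (poly (artin_schreier_poly c) z) = 0"
    using root by (metis poly_map_poly_hom poly_artin_schreier_poly diff_self)
  then show False
    using artin_schreier_poly_no_root by simp
qed

lemma in_F_beta_not_in_range:
  assumes "v \<noteq> 0"
  shows "E u + E v * \<beta> \<notin> range E"
proof
  assume "E u + E v * \<beta> \<in> range E"
  then obtain z where "E u + E v * \<beta> = E z"
    by blast
  with assms have "\<beta> = E ((z - u) / v)"
    by (simp add: field_simps)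
  with beta_not_in_range show False
    by blast
qed

(* The norm of u + v beta is v^2 times the value of X^2 + X - c at -u/v. *)
lemma norm_nonzero:
  assumes "u \<noteq> 0 \<or> v \<noteq> 0"
  shows "u * u - u * v - v * v * c \<noteq> 0"
proof (cases "v = 0")
  case False
  have "v * v * poly (artin_schreier_poly c) (- u / v) = u * u - u * v - v * v * c"
    using False by (simp add: artin_schreier_poly_def field_simps)
  with False show ?thesis
    using artin_schreier_poly_no_root by (metis mult_eq_0_iff)
qed (use assms in simp)

lemma times_conjugate:
  "(E u + E v * \<beta>) * (E (u - v) - E v * \<beta>) = E (u * u - u * v - v * v * c)"
proof -
  have "(E u + E v * \<beta>) * (E (u - v) - E v * \<beta>) = E u * E u - E u * E v - E v * E v * (\<beta> * \<beta> + \<beta>)"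
    by (simp add: algebra_simps)
  then show ?thesis
    by (simp add: root)
qed

lemma F_beta_mult:
  "(E u + E v * \<beta>) * (E u' + E v' * \<beta>) = E (u * u' + v * v' * c) + E (u * v' + u' * v - v * v') * \<beta>"
proof -
  have "(E u + E v * \<beta>) * (E u' + E v' * \<beta>)
      = E u * E u' + E v * E v' * (\<beta> * \<beta> + \<beta>) + (E u * E v' + E u' * E v - E v * E v') * \<beta>"
    by (simp add: algebra_simps)
  then show ?thesis
    by (simp add: root)
qed

lemma range_subset_F_beta: "E z \<in> F_beta"
  unfolding F_beta_def by (force intro: exI[of _ 0])

lemma F_beta_is_subfield: "is_subfield F_beta"
  unfolding is_subfield_def
proof (intro conjI ballI)
  show "0 \<in> F_beta" "1 \<in> F_beta"
    using range_subset_F_beta[of 0] range_subset_F_beta[of 1] by simp_all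
  fix x y
  assume "x \<in> F_beta" "y \<in> F_beta"
  then obtain u v u' v' where x: "x = E u + E v * \<beta>" and y: "y = E u' + E v' * \<beta>"
    unfolding F_beta_def by blast
  have "x + y = E (u + u') + E (v + v') * \<beta>" "- x = E (- u) + E (- v) * \<beta>"
    by (simp_all add: x y algebra_simps)
  then show "x + y \<in> F_beta" "- x \<in> F_beta"
    unfolding F_beta_def by blast+
  show "x * y \<in> F_beta"
    unfolding F_beta_def x y F_beta_mult by blast
  show "inverse x \<in> F_beta"
  proof (cases "x = 0")
    case True
    with \<open>0 \<in> F_beta\<close> show ?thesis
      by simp
  next
    case False
    define N where "N = u * u - u * v - v * v * c"
    have "u \<noteq> 0 \<or> v \<noteq> 0"
      using False by (auto simp: x)
    then have "N \<noteq> 0"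
      unfolding N_def by (rule norm_nonzero)
    have "x * (E (u - v) - E v * \<beta>) = E N"
      unfolding x N_def by (rule times_conjugate)
    then have "inverse x = (E (u - v) - E v * \<beta>) * inverse (E N)"
      using \<open>N \<noteq> 0\<close> by (intro inverse_unique) (simp add: mult.assoc[symmetric])
    also have "\<dots> = E ((u - v) / N) + E (- v / N) * \<beta>"
      by (simp add: divide_inverse algebra_simps)
    finally show ?thesis
      unfolding F_beta_def by blast
  qed
qed

lemma splitting_field_subset_F_beta: "splitting_field_in E (artin_schreier_poly c) \<subseteq> F_beta"
  unfolding splitting_field_in_def
proof (rule subfield_generated_least[OF _ F_beta_is_subfield], safe)
  fix z
  show "E z \<in> F_beta"
    by (rule range_subset_F_beta)
next
  fix x
  assume "poly (map_poly E (artin_schreier_poly c)) x = 0"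
  then have "x * x + x = \<beta> * \<beta> + \<beta>"
    by (simp add: poly_artin_schreier_poly root)
  moreover have "(x - \<beta>) * (x + 1 + \<beta>) = (x * x + x) - (\<beta> * \<beta> + \<beta>)"
    by (simp add: algebra_simps)
  ultimately have "(x - \<beta>) * (x + 1 + \<beta>) = 0"
    by simp
  then have "x = E 0 + E 1 * \<beta> \<or> x = E (- 1) + E (- 1) * \<beta>"
    by (simp add: eq_neg_iff_add_eq_0[symmetric] add.assoc)
  then show "x \<in> F_beta"
    unfolding F_beta_def by blast
qed

lemma alpha_square: "alpha * alpha = E (to_fract \<gamma>) - E (to_fract \<delta>) * alpha"
proof -
  have "E (to_fract \<gamma>) = E (to_fract \<delta>) * E (to_fract \<delta>) * (\<beta> * \<beta> + \<beta>)"
    by (simp add: gamma_eq root power2_eq_square)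
  then show ?thesis
    by (simp add: alpha_def algebra_simps)
qed

lemma map_poly_comp_to_fract: "map_poly (E \<circ> to_fract) p = map_poly E (fract_poly p)"
  by (simp add: map_poly_map_poly)

lemma ring_adjoin_alpha: "ring_adjoin (E \<circ> to_fract) alpha = A_alpha"
proof (intro set_eqI iffI)
  fix x
  assume "x \<in> ring_adjoin (E \<circ> to_fract) alpha"
  then obtain p where x: "x = poly (map_poly E (fract_poly p)) alpha"
    by (auto simp: ring_adjoin_def map_poly_comp_to_fract)
  have "poly (map_poly E (fract_poly p)) alpha \<in> A_alpha"
  proof (induction p)
    case 0
    show ?case
      unfolding A_alpha_def by (force intro: exI[of _ 0])
  next
    case (pCons a' p)
    then obtain a b where ab: "poly (map_poly E (fract_poly p)) alpha = E (to_fract a) + E (to_fract b) * alpha"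
      unfolding A_alpha_def by blast
    have "poly (map_poly E (fract_poly (pCons a' p))) alpha
        = E (to_fract a') + E (to_fract a) * alpha + E (to_fract b) * (alpha * alpha)"
      by (simp add: map_poly_pCons ab algebra_simps)
    also have "\<dots> = E (to_fract (a' + b * \<gamma>)) + E (to_fract (a - b * \<delta>)) * alpha"
      by (simp add: alpha_square algebra_simps)
    finally have "poly (map_poly E (fract_poly (pCons a' p))) alpha
        = E (to_fract (a' + b * \<gamma>)) + E (to_fract (a - b * \<delta>)) * alpha" .
    then show ?case
      unfolding A_alpha_def by blast
  qed
  with x show "x \<in> A_alpha"
    by simp
next
  fix x
  assume "x \<in> A_alpha"
  then obtain a b where "x = E (to_fract a) + E (to_fract b) * alpha"
    unfolding A_alpha_def by blast
  then have "x = poly (map_poly (E \<circ> to_fract) [:a, b:]) alpha"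
    by (simp add: map_poly_comp_to_fract map_poly_pCons algebra_simps)
  then show "x \<in> ring_adjoin (E \<circ> to_fract) alpha"
    unfolding ring_adjoin_def by blast
qed

lemma ring_adjoin_subset_splitting_field:
  "ring_adjoin (E \<circ> to_fract) alpha \<subseteq> splitting_field_in E (artin_schreier_poly c)"
proof
  let ?S = "splitting_field_in E (artin_schreier_poly c)"
  have S: "is_subfield ?S"
    unfolding splitting_field_in_def by (rule subfield_generated_is_subfield)
  have generators: "range E \<union> {x. poly (map_poly E (artin_schreier_poly c)) x = 0} \<subseteq> ?S"
    unfolding splitting_field_in_def by (rule subset_subfield_generated)
  then have "range E \<subseteq> ?S" "\<beta> \<in> ?S"
    using root by (auto simp: poly_artin_schreier_poly)
  then have "alpha \<in> ?S"
    using S unfolding alpha_def is_subfield_def by auto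
  fix x
  assume "x \<in> ring_adjoin (E \<circ> to_fract) alpha"
  then obtain p where "x = poly (map_poly E (fract_poly p)) alpha"
    by (auto simp: ring_adjoin_def map_poly_comp_to_fract)
  with S \<open>range E \<subseteq> ?S\<close> \<open>alpha \<in> ?S\<close> show "x \<in> ?S"
    by (simp add: poly_map_poly_hom_in_subfield)
qed

lemma A_alpha_integral:
  assumes "x \<in> A_alpha"
  shows "\<exists>p. lead_coeff p = 1 \<and> poly (map_poly (E \<circ> to_fract) p) x = 0"
proof -
  obtain a b where x: "x = E (to_fract a) + E (to_fract b) * alpha"
    using assms unfolding A_alpha_def by blast
  let ?p = "[:a * a - a * b * \<delta> - b * b * \<gamma>, b * \<delta> - 2 * a, 1:]"
  have "poly (map_poly (E \<circ> to_fract) ?p) x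
      = E (to_fract b) * E (to_fract b) * (alpha * alpha + E (to_fract \<delta>) * alpha - E (to_fract \<gamma>))"
    by (simp add: map_poly_comp_to_fract map_poly_pCons x algebra_simps)
  then have "poly (map_poly (E \<circ> to_fract) ?p) x = 0"
    by (simp add: alpha_square)
  then show ?thesis
    by (intro exI[of _ ?p]) simp
qed

lemma F_beta_quadratic_root:
  "poly (map_poly E [:u * u - u * v - v * v * c, v, 1:]) (E u + E v * \<beta>) = 0"
proof -
  have "poly (map_poly E [:u * u - u * v - v * v * c, v, 1:]) (E u + E v * \<beta>)
      = E v * E v * (\<beta> * \<beta> + \<beta> - E c) + (E u + E v * \<beta>) * E (u + u)"
    by (simp add: algebra_simps)
  then show ?thesis
    by (simp add: root char_2_add_self[OF char_2])
qed

(* For v \<noteq> 0 the quadratic above is the minimal polynomial of u + v beta over F, so it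
   divides every monic polynomial over A vanishing there. *)
lemma integral_F_beta_coeffs:
  assumes "v \<noteq> 0" and monic: "lead_coeff p = 1"
    and root: "poly (map_poly E (fract_poly p)) (E u + E v * \<beta>) = 0"
  shows "v \<in> range to_fract" "u * u - u * v - v * v * c \<in> range to_fract"
proof -
  let ?h = "[:u * u - u * v - v * v * c, v, 1:]"
  have "?h dvd fract_poly p"
    using quadratic_dvd_of_common_root[OF _ F_beta_quadratic_root root]
      in_F_beta_not_in_range[OF assms(1)] by simp
  then have "coeff ?h i \<in> range to_fract" for i
    by (intro monic_factor_coeffs_integral[OF monic]) simp_all
  from this[of 1] this[of 0] show "v \<in> range to_fract" "u * u - u * v - v * v * c \<in> range to_fract"
    by simp_all
qed

lemma integral_in_A_alpha:
  assumes in_splitting_field: "x \<in> splitting_field_in E (artin_schreier_poly c)"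
    and monic: "lead_coeff p = 1" and p_root: "poly (map_poly (E \<circ> to_fract) p) x = 0"
  shows "x \<in> A_alpha"
proof -
  obtain u v where x: "x = E u + E v * \<beta>"
    using in_splitting_field splitting_field_subset_F_beta unfolding F_beta_def by blast
  have P_root: "poly (map_poly E (fract_poly p)) (E u + E v * \<beta>) = 0"
    using p_root by (simp add: map_poly_comp_to_fract x)
  show ?thesis
  proof (cases "v = 0")
    case True
    then have "poly (fract_poly p) u = 0"
      using P_root by simp
    then obtain a where "u = to_fract a"
      using integral_root_in_range[OF monic] by auto
    with True have "x = E (to_fract a) + E (to_fract 0) * alpha"
      by (simp add: x)
    then show ?thesis
      unfolding A_alpha_def by blast
  next
    case False
    define w where "w = v / to_fract \<delta>"
    have "to_fract \<delta> * w = v"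
      using delta_nonzero by (simp add: w_def)
    moreover have "u\<^sup>2 - to_fract \<delta> * u * w - to_fract \<gamma> * w\<^sup>2 = u * u - u * v - v * v * c"
      using delta_nonzero by (simp add: w_def gamma_eq field_simps power2_eq_square)
    ultimately have coordinates: "to_fract \<delta> * w \<in> range to_fract"
      "u\<^sup>2 - to_fract \<delta> * u * w - to_fract \<gamma> * w\<^sup>2 \<in> range to_fract"
      using integral_F_beta_coeffs[OF False monic P_root] by simp_all
    have "u \<in> range to_fract" "w \<in> range to_fract"
      using integral_coordinates[OF coordinates] ramified by simp_all
    moreover have "x = E u + E w * alpha"
      using delta_nonzero by (simp add: x alpha_def w_def)
    ultimately show ?thesis
      unfolding A_alpha_def by blast
  qed
qed

theorem integral_closure_eq_ring_adjoin:
  "integral_closure_in (E \<circ> to_fract) (splitting_field_in E (artin_schreier_poly c))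
     = ring_adjoin (E \<circ> to_fract) (E (to_fract \<delta>) * \<beta>)"
  unfolding alpha_def[symmetric]
proof (intro set_eqI iffI)
  fix x
  assume "x \<in> integral_closure_in (E \<circ> to_fract) (splitting_field_in E (artin_schreier_poly c))"
  then obtain p where "x \<in> splitting_field_in E (artin_schreier_poly c)" "lead_coeff p = 1"
    "poly (map_poly (E \<circ> to_fract) p) x = 0"
    unfolding integral_closure_in_def by blast
  then have "x \<in> A_alpha"
    by (rule integral_in_A_alpha)
  then show "x \<in> ring_adjoin (E \<circ> to_fract) alpha"
    by (simp add: ring_adjoin_alpha)
next
  fix x
  assume x: "x \<in> ring_adjoin (E \<circ> to_fract) alpha"
  then obtain p :: "'k poly poly" where "lead_coeff p = 1" "poly (map_poly (E \<circ> to_fract) p) x = 0"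
    using A_alpha_integral by (auto simp: ring_adjoin_alpha)
  with x ring_adjoin_subset_splitting_field
  show "x \<in> integral_closure_in (E \<circ> to_fract) (splitting_field_in E (artin_schreier_poly c))"
    unfolding integral_closure_in_def by blast
qed

end

section \<open>The different\<close>

lemma prod_power_square:
  fixes Q :: "nat \<Rightarrow> 'a::comm_monoid_mult"
  assumes "\<forall>i<s. e i \<ge> 1"
  shows "(\<Prod>i<s. Q i ^ e i)\<^sup>2 = (\<Prod>i<s. Q i) * (\<Prod>i<s. Q i ^ (2 * e i - 1))"
proof -
  have "Q i ^ e i * Q i ^ e i = Q i * Q i ^ (2 * e i - 1)" if "i < s" for i
  proof -
    have "e i + e i = Suc (2 * e i - 1)"
      using assms that by auto
    then show ?thesis
      by (metis power_Suc power_add)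
  qed
  then show ?thesis
    by (simp add: power2_eq_square flip: prod.distrib)
qed

lemma prime_elem_dvd_prod:
  fixes f :: "'b \<Rightarrow> 'a::idom"
  assumes "prime_elem \<pi>" "finite I" "\<pi> dvd prod f I"
  shows "\<exists>i\<in>I. \<pi> dvd f i"
  using assms(2,3)
proof (induction I rule: finite_induct)
  case empty
  then show ?case
    using assms(1) prime_elem_not_unit by auto
next
  case (insert i I)
  then show ?case
    using assms(1) prime_elem_dvd_mult_iff by auto
qed

lemma monic_irreducible_eq_if_common_factor:
  fixes p q \<pi> :: "'a::field poly"
  assumes "lead_coeff p = 1" "lead_coeff q = 1" "irreducible p" "irreducible q"
    and "\<pi> dvd p" "\<pi> dvd q" "\<not> is_unit \<pi>"
  shows "p = q"
proof -
  obtain k l where p: "p = \<pi> * k" and q: "q = \<pi> * l"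
    using assms(5,6) by (elim dvdE)
  then have "is_unit k" "is_unit l"
    using assms(3,4,7) irreducibleD by blast+
  then have "k = [:lead_coeff k:]" "l = [:lead_coeff l:]"
    by (auto simp: is_unit_poly_iff)
  moreover have "lead_coeff \<pi> * lead_coeff k = 1" "lead_coeff \<pi> * lead_coeff l = 1"
    using assms(1,2) by (simp_all add: p q lead_coeff_mult)
  then have "lead_coeff k = lead_coeff l"
    by (metis mult.assoc mult.commute mult_1_left)
  ultimately show ?thesis
    using p q by metis
qed

lemma prime_elem_not_dvd_const:
  fixes \<pi> :: "'a::field poly"
  assumes "prime_elem \<pi>" "a \<noteq> 0"
  shows "\<not> \<pi> dvd [:a:]"
proof -
  have "a dvd 1"
    using assms(2) by (intro dvdI[of _ _ "inverse a"]) simp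
  then have "is_unit [:a:]"
    by (simp add: is_unit_const_poly_iff)
  then show ?thesis
    using assms(1) prime_elem_not_unit dvd_unit_imp_unit by blast
qed

lemma prime_elem_square_not_dvd_prod:
  fixes Q :: "nat \<Rightarrow> 'a::field poly"
  assumes primes: "\<forall>i<s. lead_coeff (Q i) = 1 \<and> irreducible (Q i)"
    and distinct: "inj_on Q {..<s}" and prime: "prime_elem \<pi>"
  shows "\<not> \<pi>\<^sup>2 dvd (\<Prod>i<s. Q i)"
proof
  assume square: "\<pi>\<^sup>2 dvd (\<Prod>i<s. Q i)"
  then have "\<pi> dvd (\<Prod>i<s. Q i)"
    by (rule dvd_trans[rotated]) (simp add: power2_eq_square)
  then obtain i where i: "i < s" "\<pi> dvd Q i"
    using prime_elem_dvd_prod[OF prime] by auto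
  define R where "R = (\<Prod>j\<in>{..<s} - {i}. Q j)"
  have "\<not> \<pi> dvd R"
  proof
    assume "\<pi> dvd R"
    then have "\<exists>j\<in>{..<s} - {i}. \<pi> dvd Q j"
      unfolding R_def by (rule prime_elem_dvd_prod[OF prime, rotated]) simp
    then obtain j where j: "j < s" "j \<noteq> i" "\<pi> dvd Q j"
      by auto
    then have "Q i = Q j"
      using primes i prime prime_elem_not_unit
      by (intro monic_irreducible_eq_if_common_factor[of _ _ \<pi>]) simp_all
    with i(1) j distinct show False
      by (auto dest: inj_onD)
  qed
  moreover have "(\<Prod>i<s. Q i) = R * Q i"
    unfolding R_def using i(1) prod.remove[of "{..<s}" i Q] by (simp add: mult.commute)
  ultimately have "\<pi>\<^sup>2 dvd Q i"
    using prime_power_dvd_multD[OF prime, of 2 R "Q i"] square by simp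
  then obtain t where "Q i = \<pi>\<^sup>2 * t"
    by (elim dvdE)
  then have "Q i = \<pi> * (\<pi> * t)"
    by (simp add: power2_eq_square mult.assoc)
  moreover have "irreducible (Q i)"
    using primes i(1) by simp
  ultimately have "is_unit \<pi> \<or> is_unit (\<pi> * t)"
    using irreducibleD by blast
  with prime show False
    using prime_elem_not_unit by (auto simp: is_unit_mult_iff)
qed

lemma different_ramified:
  fixes Q :: "nat \<Rightarrow> 'k::field poly" and n :: "'k poly" and \<epsilon> :: 'k
  assumes primes: "\<forall>i<s. lead_coeff (Q i) = 1 \<and> irreducible (Q i)"
    and distinct: "inj_on Q {..<s}"
    and e_pos: "\<forall>i<s. e i \<ge> 1"
    and coprime: "coprime n (\<Prod>i<s. Q i ^ (2 * e i - 1))"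
    and eps: "\<epsilon> \<noteq> 0"
    and prime: "prime_elem \<pi>" and dvd: "\<pi> dvd [:\<epsilon>:] * (\<Prod>i<s. Q i ^ e i)"
  shows "\<pi> dvd [:\<epsilon>\<^sup>2:] * (\<Prod>i<s. Q i) * n \<and> \<not> \<pi>\<^sup>2 dvd [:\<epsilon>\<^sup>2:] * (\<Prod>i<s. Q i) * n"
proof
  have "\<pi> dvd (\<Prod>i<s. Q i ^ e i)"
    using dvd prime_elem_not_dvd_const[OF prime eps] prime_elem_dvd_mult_iff[OF prime] by blast
  then obtain i where i: "i < s" "\<pi> dvd Q i ^ e i"
    using prime_elem_dvd_prod[OF prime] by auto
  then have \<pi>_Q: "\<pi> dvd Q i"
    using prime_elem_dvd_power[OF prime] by simp
  also have "Q i dvd (\<Prod>i<s. Q i)"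
    using i(1) by (intro dvd_prodI) auto
  finally show "\<pi> dvd [:\<epsilon>\<^sup>2:] * (\<Prod>i<s. Q i) * n"
    by (rule dvd_mult2[OF dvd_mult])
  have "Q i dvd Q i ^ (2 * e i - 1)"
    using i(1) e_pos by (intro dvd_power) auto
  also have "\<dots> dvd (\<Prod>i<s. Q i ^ (2 * e i - 1))"
    using i(1) by (intro dvd_prodI) auto
  finally have \<pi>_m: "\<pi> dvd (\<Prod>i<s. Q i ^ (2 * e i - 1))"
    by (rule dvd_trans[OF \<pi>_Q])
  have "\<not> \<pi> dvd n"
    using coprime_common_divisor[OF coprime _ \<pi>_m] prime_elem_not_unit[OF prime] by auto
  moreover have "\<not> \<pi> dvd [:\<epsilon>\<^sup>2:]"
    using eps by (intro prime_elem_not_dvd_const[OF prime]) simp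
  ultimately have "\<not> \<pi> dvd [:\<epsilon>\<^sup>2:] * n"
    by (simp only: prime_elem_dvd_mult_iff[OF prime] de_Morgan_disj) simp
  show "\<not> \<pi>\<^sup>2 dvd [:\<epsilon>\<^sup>2:] * (\<Prod>i<s. Q i) * n"
  proof
    assume "\<pi>\<^sup>2 dvd [:\<epsilon>\<^sup>2:] * (\<Prod>i<s. Q i) * n"
    then have square: "\<pi>\<^sup>2 dvd ([:\<epsilon>\<^sup>2:] * n) * (\<Prod>i<s. Q i)"
      by (simp only: ac_simps)
    have "\<pi>\<^sup>2 dvd (\<Prod>i<s. Q i)"
      using prime_power_dvd_multD[OF prime square _ \<open>\<not> \<pi> dvd [:\<epsilon>\<^sup>2:] * n\<close>] by simp
    with prime_elem_square_not_dvd_prod[OF primes distinct prime] show False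
      by contradiction
  qed
qed

lemma to_fract_different_square:
  fixes D P m n :: "'a::field poly"
  assumes "D\<^sup>2 = P * m" "m \<noteq> 0"
  shows "to_fract ([:\<epsilon>\<^sup>2:] * P * n) = to_fract ([:\<epsilon>:] * D) ^ 2 * (to_fract n / to_fract m)"
proof -
  have "([:\<epsilon>:] * D)\<^sup>2 * n = [:\<epsilon>\<^sup>2:] * P * n * m"
    using assms(1) by (simp add: power_mult_distrib power2_eq_square ac_simps)
  then have "to_fract ([:\<epsilon>:] * D) ^ 2 * to_fract n = to_fract ([:\<epsilon>\<^sup>2:] * P * n) * to_fract m"
    by (metis to_fract_mult to_fract_power)
  with assms(2) show ?thesis
    by (simp add: field_simps)
qed

lemma (in field_hom) scaled_root:
  assumes "x * x + E d * x + E (d\<^sup>2 * c) = 0" "d \<noteq> 0" "c + c = 0"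
  shows "(x / E d) * (x / E d) + x / E d = E c"
proof -
  have "E d ^ 2 * ((x / E d) * (x / E d) + x / E d + E c) = x * x + E d * x + E (d\<^sup>2 * c)"
    using assms(2) by (simp add: power2_eq_square field_simps)
  with assms(1,2) have "(x / E d) * (x / E d) + x / E d = - E c"
    by (simp add: add_eq_0_iff2)
  also have "\<dots> = E c"
    using assms(3) by (metis add.inverse_unique hom_add hom_0)
  finally show ?thesis .
qed

theorem lemma5p1:
  fixes emb :: "'k::{field,finite} poly fract \<Rightarrow> 'K::field"
    and s :: nat and Q :: "nat \<Rightarrow> 'k poly" and e :: "nat \<Rightarrow> nat"
    and n :: "'k poly" and \<epsilon> :: 'k and \<alpha> :: 'K
  assumes char2: "CHAR('k) = 2"
    and primes: "\<forall>i<s. lead_coeff (Q i) = 1 \<and> irreducible (Q i)"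
    and distinct: "inj_on Q {..<s}"
    and e_pos: "\<forall>i<s. e i \<ge> 1"
    and coprime: "coprime n (\<Prod>i<s. Q i ^ (2 * e i - 1))"
    and irred: "irreducible [: - (to_fract n / to_fract (\<Prod>i<s. Q i ^ (2 * e i - 1))), 1, 1 :]"
    and hom: "is_ring_hom emb"
    and eps: "\<epsilon> \<noteq> 0"
    and root: "poly (map_poly (emb \<circ> to_fract)
                 [: [:\<epsilon>\<^sup>2:] * (\<Prod>i<s. Q i) * n, [:\<epsilon>:] * (\<Prod>i<s. Q i ^ e i), 1 :]) \<alpha> = 0"
  shows "integral_closure_in (emb \<circ> to_fract)
           (splitting_field_in emb
              [: - (to_fract n / to_fract (\<Prod>i<s. Q i ^ (2 * e i - 1))), 1, 1 :])
         = ring_adjoin (emb \<circ> to_fract) \<alpha>"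
proof -
  interpret field_hom emb
    by (rule field_hom.intro) (rule hom)
  define m where "m = (\<Prod>i<s. Q i ^ (2 * e i - 1))"
  define c where "c = to_fract n / to_fract m"
  define \<delta> where "\<delta> = [:\<epsilon>:] * (\<Prod>i<s. Q i ^ e i)"
  define \<gamma> where "\<gamma> = [:\<epsilon>\<^sup>2:] * (\<Prod>i<s. Q i) * n"
  have "m \<noteq> 0" "\<delta> \<noteq> 0"
    using primes eps by (auto simp: m_def \<delta>_def prod_zero_iff)
  have gamma_eq: "to_fract \<gamma> = to_fract \<delta> ^ 2 * c"
    unfolding \<gamma>_def \<delta>_def c_def
    by (rule to_fract_different_square[OF prod_power_square[OF e_pos, of Q, folded m_def] \<open>m \<noteq> 0\<close>])
  have "\<alpha> * \<alpha> + emb (to_fract \<delta>) * \<alpha> + emb (to_fract \<gamma>) = 0"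
    using root by (simp add: \<gamma>_def \<delta>_def map_poly_pCons algebra_simps)
  then have "(\<alpha> / emb (to_fract \<delta>)) * (\<alpha> / emb (to_fract \<delta>)) + \<alpha> / emb (to_fract \<delta>) = emb c"
    unfolding gamma_eq using \<open>\<delta> \<noteq> 0\<close>
    by (intro scaled_root[OF _ _ char_2_add_self[OF char2]]) simp_all
  then interpret artin_schreier_extension emb c \<delta> \<gamma> "\<alpha> / emb (to_fract \<delta>)"
    using char2 irred gamma_eq \<open>\<delta> \<noteq> 0\<close> different_ramified[OF primes distinct e_pos coprime eps]
    by unfold_locales (simp_all add: artin_schreier_poly_def c_def m_def \<gamma>_def \<delta>_def)
  from integral_closure_eq_ring_adjoin \<open>\<delta> \<noteq> 0\<close> show ?thesis
    unfolding artin_schreier_poly_def c_def m_def by simp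
qed

end
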